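(* Let $G$ be a topological group whose torsion part $\mathrm{tor}(G)$ is dense in $G$ and totally disconnected. Then a $G$-regular space $X$ is totally disconnected if and only if $\mathrm{tor}(C_p(X,G))$ is dense in $C_p(X,G)$.
   Context: All spaces are Tychonoff and non-empty; topological groups are Hausdorff; $e$ is the identity. For a group $K$, $\mathrm{tor}(K)=\{g\in K: g^n=e\text{ for some } n\ge1\}$. $C_p(X,G)$ is the group of continuous maps $X\to G$ with pointwise operations and the topology of pointwise convergence. $X$ is $G$-regular if for every closed $F\subseteq X$ and every $x\in X\setminus F$ there exist $f\in C_p(X,G)$ and $g\in G\setminus\{e\}$ with $f(x)=g$ and $f(F)\subseteq\{e\}$. A space is totally disconnected if for every two distinct points $x,y$ there is a clopen set containing $x$ but not $y$. *)

theory Defs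
  imports "HOL-Analysis.Analysis" "HOL-Algebra.Group"
begin

definition topological_group :: "('g, 'm) monoid_scheme \<Rightarrow> 'g topology \<Rightarrow> bool" where
  "topological_group G T \<longleftrightarrow> group G \<and> topspace T = carrier G \<and> Hausdorff_space T \<and>
     continuous_map (prod_topology T T) T (\<lambda>(a, b). a \<otimes>\<^bsub>G\<^esub> b) \<and>
     continuous_map T T (\<lambda>a. inv\<^bsub>G\<^esub> a)"

definition tychonoff_space :: "'a topology \<Rightarrow> bool" where
  "tychonoff_space X \<longleftrightarrow> t1_space X \<and> completely_regular_space X"

definition totally_disconnected_sp :: "'a topology \<Rightarrow> bool" where
  "totally_disconnected_sp X \<longleftrightarrow>
     (\<forall>x\<in>topspace X. \<forall>y\<in>topspace X. x \<noteq> y \<longrightarrow>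
        (\<exists>U. openin X U \<and> closedin X U \<and> x \<in> U \<and> y \<notin> U))"

definition group_tor :: "('g, 'm) monoid_scheme \<Rightarrow> 'g set" where
  "group_tor G = {g \<in> carrier G. \<exists>n::nat. n \<ge> 1 \<and> g [^]\<^bsub>G\<^esub> n = \<one>\<^bsub>G\<^esub>}"

definition Cp_set :: "'x topology \<Rightarrow> 'g topology \<Rightarrow> ('x \<Rightarrow> 'g) set" where
  "Cp_set X T = {f. continuous_map X T f \<and> f \<in> extensional (topspace X)}"

definition Cp_top :: "'x topology \<Rightarrow> 'g topology \<Rightarrow> ('x \<Rightarrow> 'g) topology" where
  "Cp_top X T = subtopology (product_topology (\<lambda>_. T) (topspace X)) (Cp_set X T)"

text \<open>Torsion part of C_p(X,G) under pointwise operations: f^n = e means f(x)^n = e for all x.\<close>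
definition Cp_tor :: "('g, 'm) monoid_scheme \<Rightarrow> 'x topology \<Rightarrow> 'g topology \<Rightarrow> ('x \<Rightarrow> 'g) set" where
  "Cp_tor G X T = {f \<in> Cp_set X T. \<exists>n::nat. n \<ge> 1 \<and>
      (\<forall>x\<in>topspace X. f x [^]\<^bsub>G\<^esub> n = \<one>\<^bsub>G\<^esub>)}"

definition G_regular :: "('g, 'm) monoid_scheme \<Rightarrow> 'g topology \<Rightarrow> 'x topology \<Rightarrow> bool" where
  "G_regular G T X \<longleftrightarrow>
     (\<forall>F x. closedin X F \<and> x \<in> topspace X - F \<longrightarrow>
        (\<exists>f\<in>Cp_set X T. \<exists>g\<in>carrier G. g \<noteq> \<one>\<^bsub>G\<^esub> \<and> f x = g \<and> f ` F \<subseteq> {\<one>\<^bsub>G\<^esub>}))"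

end

theory Submission imports Defs begin

text \<open>If X is totally disconnected, any finitely many prescribed values of a map into G can be
  realised by a locally constant, hence continuous, map taking only those values; choosing the
  values in the dense set tor(G) puts such a map, which is torsion with a common exponent, into
  every basic neighbourhood of C_p(X,G). Conversely, G-regularity gives f with f(x) \<noteq> f(y);
  a torsion map h close to f still separates x and y, and since h takes values in the totally
  disconnected space tor(G), the preimage under h of a clopen set of tor(G) separates x from y.\<close>

lemma continuous_map_if_clopen:
  assumes "openin X W" "closedin X W" "continuous_map X Y f" "continuous_map X Y g"
  shows "continuous_map X Y (\<lambda>x. if x \<in> W then f x else g x)"
proof (rule continuous_map_cases)
  have "X frontier_of W = {}"
    using frontier_of_eq_empty[OF openin_subset] assms(1,2) by blast
  then show "\<And>x. x \<in> X frontier_of {x. x \<in> W} \<Longrightarrow> f x = g x" by simp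
qed (use assms(3,4) continuous_map_from_subtopology in auto)

lemma totally_disconnected_sp_clopen_avoiding_finite:
  assumes td: "totally_disconnected_sp X" and "finite K" "K \<subseteq> topspace X"
    and a: "a \<in> topspace X" "a \<notin> K"
  shows "\<exists>W. openin X W \<and> closedin X W \<and> a \<in> W \<and> W \<inter> K = {}"
  using assms(2-3) a(2)
proof (induction K rule: finite_induct)
  case empty
  then show ?case using a by (intro exI[of _ "topspace X"]) auto
next
  case (insert b K)
  then obtain W where W: "openin X W" "closedin X W" "a \<in> W" "W \<inter> K = {}" by auto
  obtain V where V: "openin X V" "closedin X V" "a \<in> V" "b \<notin> V"
    using td insert.prems a unfolding totally_disconnected_sp_def by force
  show ?case using W V by (intro exI[of _ "W \<inter> V"]) auto
qed

lemma totally_disconnected_sp_interpolate: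
  assumes td: "totally_disconnected_sp X" and "finite K" "K \<subseteq> topspace X"
    and "c ` K \<subseteq> topspace Y" "y0 \<in> topspace Y"
  shows "\<exists>h. continuous_map X Y h \<and> (\<forall>k\<in>K. h k = c k) \<and> h ` topspace X \<subseteq> insert y0 (c ` K)"
  using assms(2-4)
proof (induction K rule: finite_induct)
  case empty
  then show ?case using \<open>y0 \<in> topspace Y\<close> by (intro exI[of _ "\<lambda>x. y0"]) auto
next
  case (insert a K)
  then obtain h where h: "continuous_map X Y h" "\<forall>k\<in>K. h k = c k"
    "h ` topspace X \<subseteq> insert y0 (c ` K)"
    by auto
  obtain W where W: "openin X W" "closedin X W" "a \<in> W" "W \<inter> K = {}"
    using totally_disconnected_sp_clopen_avoiding_finite[OF td \<open>finite K\<close>, of a] insert by auto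
  have "continuous_map X Y (\<lambda>x. if x \<in> W then c a else h x)"
    using insert.prems by (intro continuous_map_if_clopen[OF W(1,2) _ h(1)]) auto
  moreover have "(if k \<in> W then c a else h k) = c k" if "k \<in> insert a K" for k
    using that W h by auto
  moreover have "(\<lambda>x. if x \<in> W then c a else h x) ` topspace X \<subseteq> insert y0 (c ` insert a K)"
    using h by auto
  ultimately show ?case by blast
qed

lemma group_tor_common_exponent:
  fixes G (structure)
  assumes "group G" and "finite S" and "S \<subseteq> group_tor G"
  shows "\<exists>N::nat. N \<ge> 1 \<and> (\<forall>s\<in>S. s [^] N = \<one>)"
  using assms(2,3)
proof (induction S rule: finite_induct)
  case empty
  then show ?case by (intro exI[of _ 1]) auto
next
  case (insert s S)
  interpret group G by fact
  obtain N :: nat where N: "N \<ge> 1" "\<forall>t\<in>S. t [^] N = \<one>" using insert by auto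
  obtain n :: nat where n: "n \<ge> 1" "s [^] n = \<one>" "s \<in> carrier G"
    using insert.prems unfolding group_tor_def by auto
  have "t [^] (N * n) = \<one>" if "t \<in> insert s S" for t
  proof (cases "t = s")
    case True
    then show ?thesis using n nat_pow_pow[of s n N] by (simp add: mult.commute)
  next
    case False
    then have "t \<in> S" "t \<in> carrier G" using that insert.prems unfolding group_tor_def by auto
    then show ?thesis using N nat_pow_pow[of t N n] by simp
  qed
  then show ?case using N n by (intro exI[of _ "N * n"]) auto
qed

lemma topspace_Cp_top: "topspace (Cp_top X T) = Cp_set X T"
  unfolding Cp_top_def Cp_set_def
  by (auto simp: PiE_iff continuous_map_def extensional_def)

lemma continuous_map_Cp_top_eval:
  assumes "x \<in> topspace X"
  shows "continuous_map (Cp_top X T) T (\<lambda>h. h x)"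
  unfolding Cp_top_def
  by (rule continuous_map_from_subtopology) (rule continuous_map_product_projection[OF assms])

lemma Cp_top_dense_iff:
  assumes "D \<subseteq> Cp_set X T"
  shows "Cp_top X T closure_of D = topspace (Cp_top X T) \<longleftrightarrow>
    (\<forall>f\<in>Cp_set X T. \<forall>K U. finite K \<and> K \<subseteq> topspace X \<and> (\<forall>k\<in>K. openin T (U k) \<and> f k \<in> U k)
       \<longrightarrow> (\<exists>h\<in>D. \<forall>k\<in>K. h k \<in> U k))"
    (is "?dense \<longleftrightarrow> ?approx")
proof
  assume ?dense
  show ?approx
  proof (intro ballI allI impI)
    fix f K U
    assume f: "f \<in> Cp_set X T"
      and KU: "finite K \<and> K \<subseteq> topspace X \<and> (\<forall>k\<in>K. openin T (U k) \<and> f k \<in> U k)"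
    define Ob where "Ob = topspace (Cp_top X T) \<inter> \<Inter>((\<lambda>k. {h \<in> topspace (Cp_top X T). h k \<in> U k}) ` K)"
    have "openin (Cp_top X T) Ob"
      unfolding Ob_def using KU
      by (intro openin_Int_Inter)
        (auto intro!: openin_continuous_map_preimage[OF continuous_map_Cp_top_eval])
    moreover have "f \<in> Ob" using f KU by (auto simp: Ob_def topspace_Cp_top)
    moreover have "f \<in> Cp_top X T closure_of D"
      using \<open>?dense\<close> f by (simp add: topspace_Cp_top)
    ultimately obtain h where "h \<in> D" "h \<in> Ob"
      unfolding in_closure_of by blast
    then show "\<exists>h\<in>D. \<forall>k\<in>K. h k \<in> U k" unfolding Ob_def by blast
  qed
next
  assume approx: ?approx
  show ?dense
  proof (rule subset_antisym[OF closure_of_subset_topspace subsetI])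
    fix f assume "f \<in> topspace (Cp_top X T)"
    then have f: "f \<in> Cp_set X T" by (simp add: topspace_Cp_top)
    show "f \<in> Cp_top X T closure_of D"
      unfolding in_closure_of topspace_Cp_top
    proof (intro conjI f allI impI)
      fix Ob assume "f \<in> Ob \<and> openin (Cp_top X T) Ob"
      then obtain V where V: "openin (product_topology (\<lambda>_. T) (topspace X)) V"
        "Ob = V \<inter> Cp_set X T" "f \<in> V"
        unfolding Cp_top_def openin_subtopology by auto
      then obtain U where U: "finite {i \<in> topspace X. U i \<noteq> topspace T}"
        "\<forall>i\<in>topspace X. openin T (U i)" "f \<in> Pi\<^sub>E (topspace X) U" "Pi\<^sub>E (topspace X) U \<subseteq> V"
        unfolding openin_product_topology_alt by metis
      define K where "K = {i \<in> topspace X. U i \<noteq> topspace T}"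
      have "finite K \<and> K \<subseteq> topspace X \<and> (\<forall>k\<in>K. openin T (U k) \<and> f k \<in> U k)"
        using U(1-3) unfolding K_def PiE_iff by auto
      with approx f obtain h where h: "h \<in> D" "\<forall>k\<in>K. h k \<in> U k"
        by (elim ballE allE impE) auto
      have "continuous_map X T h" "h \<in> extensional (topspace X)"
        using h(1) assms by (auto simp: Cp_set_def)
      then have "h \<in> Pi\<^sub>E (topspace X) U"
        using h(2) by (auto simp: PiE_iff K_def continuous_map_def)
      then show "\<exists>y. y \<in> D \<and> y \<in> Ob" using h(1) assms U(4) V(2) by blast
    qed
  qed
qed

lemma Cp_tor_subset: "Cp_tor G X T \<subseteq> Cp_set X T"
  unfolding Cp_tor_def by blast

lemma Cp_tor_dense_if_totally_disconnected:
  assumes "group G" "topspace T = carrier G" and dense: "T closure_of group_tor G = topspace T"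
    and td: "totally_disconnected_sp X"
  shows "Cp_top X T closure_of Cp_tor G X T = topspace (Cp_top X T)"
  unfolding Cp_top_dense_iff[OF Cp_tor_subset]
proof (intro ballI allI impI)
  fix f K U
  assume f: "f \<in> Cp_set X T"
    and KU: "finite K \<and> K \<subseteq> topspace X \<and> (\<forall>k\<in>K. openin T (U k) \<and> f k \<in> U k)"
  have "\<exists>t. t \<in> group_tor G \<and> t \<in> U k" if "k \<in> K" for k
  proof -
    have "f k \<in> T closure_of group_tor G"
      using f KU that dense by (auto simp: Cp_set_def continuous_map_def)
    then show ?thesis using KU that unfolding in_closure_of by blast
  qed
  then obtain c where c: "\<And>k. k \<in> K \<Longrightarrow> c k \<in> group_tor G \<and> c k \<in> U k" by metis
  have "monoid G" using \<open>group G\<close> by (rule group.is_monoid)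
  then have one_tor: "\<one>\<^bsub>G\<^esub> \<in> group_tor G"
    unfolding group_tor_def by (auto intro!: exI[of _ 1] simp: monoid.one_closed monoid.l_one)
  have tor_T: "group_tor G \<subseteq> topspace T"
    using \<open>topspace T = carrier G\<close> unfolding group_tor_def by auto
  have K: "finite K" "K \<subseteq> topspace X" and c_tor: "insert \<one>\<^bsub>G\<^esub> (c ` K) \<subseteq> group_tor G"
    using KU c one_tor by auto
  then have cK: "c ` K \<subseteq> topspace T" and one_T: "\<one>\<^bsub>G\<^esub> \<in> topspace T"
    using tor_T by auto
  obtain h where h: "continuous_map X T h" "\<forall>k\<in>K. h k = c k"
    "h ` topspace X \<subseteq> insert \<one>\<^bsub>G\<^esub> (c ` K)"
    using totally_disconnected_sp_interpolate[OF td K cK one_T] by blast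
  have "finite (insert \<one>\<^bsub>G\<^esub> (c ` K))" using K(1) by simp
  then obtain N :: nat where N: "N \<ge> 1" "\<forall>s\<in>insert \<one>\<^bsub>G\<^esub> (c ` K). s [^]\<^bsub>G\<^esub> N = \<one>\<^bsub>G\<^esub>"
    using group_tor_common_exponent[OF \<open>group G\<close> _ c_tor] by blast
  have "continuous_map X T (restrict h (topspace X))"
    using h(1) by (rule continuous_map_eq) simp
  then have "restrict h (topspace X) \<in> Cp_set X T"
    unfolding Cp_set_def by simp
  then have "restrict h (topspace X) \<in> Cp_tor G X T"
    unfolding Cp_tor_def using N h(3) by (auto intro!: exI[of _ N])
  moreover have "\<forall>k\<in>K. restrict h (topspace X) k \<in> U k"
    using KU c h(2) by auto
  ultimately show "\<exists>h\<in>Cp_tor G X T. \<forall>k\<in>K. h k \<in> U k" by blast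
qed

lemma totally_disconnected_sp_separate_by_map:
  assumes h: "continuous_map X Y h" and "totally_disconnected_sp Y"
    and "x \<in> topspace X" "y \<in> topspace X" "h x \<noteq> h y"
  shows "\<exists>W. openin X W \<and> closedin X W \<and> x \<in> W \<and> y \<notin> W"
proof -
  have "h x \<in> topspace Y" "h y \<in> topspace Y"
    using assms(3,4) continuous_map_image_subset_topspace[OF h] by auto
  then obtain V where V: "openin Y V" "closedin Y V" "h x \<in> V" "h y \<notin> V"
    using assms(2,5) unfolding totally_disconnected_sp_def by auto
  show ?thesis
    using openin_continuous_map_preimage[OF h V(1)] closedin_continuous_map_preimage[OF h V(2)]
      V(3,4) assms(3)
    by (intro exI[of _ "{z \<in> topspace X. h z \<in> V}"]) auto
qed

lemma totally_disconnected_if_Cp_tor_dense: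
  assumes TG: "topspace T = carrier G" and "Hausdorff_space T" "t1_space X" and reg: "G_regular G T X"
    and td_tor: "totally_disconnected_sp (subtopology T (group_tor G))"
    and dense: "Cp_top X T closure_of Cp_tor G X T = topspace (Cp_top X T)"
  shows "totally_disconnected_sp X"
  unfolding totally_disconnected_sp_def
proof (intro ballI impI)
  fix x y assume x: "x \<in> topspace X" and y: "y \<in> topspace X" and "x \<noteq> y"
  then have "closedin X {y}" "x \<in> topspace X - {y}"
    using \<open>t1_space X\<close> by (auto intro: closedin_t1_singleton)
  then obtain f where f: "f \<in> Cp_set X T" "f x \<noteq> \<one>\<^bsub>G\<^esub>" "f y = \<one>\<^bsub>G\<^esub>"
    using reg[unfolded G_regular_def, rule_format, of "{y}" x] by auto
  have "f ` topspace X \<subseteq> topspace T"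
    using f(1) by (simp add: Cp_set_def continuous_map_image_subset_topspace)
  with x y have "f x \<in> topspace T" "f y \<in> topspace T" by auto
  then obtain U V where UV: "openin T U" "openin T V" "f x \<in> U" "f y \<in> V" "disjnt U V"
    using \<open>Hausdorff_space T\<close> f unfolding Hausdorff_space_def by metis
  define W where "W = (\<lambda>z. if z = x then U else V)"
  have "\<forall>k\<in>{x, y}. openin T (W k) \<and> f k \<in> W k"
    using UV \<open>x \<noteq> y\<close> by (auto simp: W_def)
  then obtain h where h: "h \<in> Cp_tor G X T" "h x \<in> U" "h y \<in> V"
    using dense f x y UV \<open>x \<noteq> y\<close> unfolding Cp_top_dense_iff[OF Cp_tor_subset]
    by (elim ballE allE[of _ "{x, y}"] allE[of _ W] impE) (auto simp: W_def)
  then obtain n :: nat where "\<forall>z\<in>topspace X. h z [^]\<^bsub>G\<^esub> n = \<one>\<^bsub>G\<^esub>" "n \<ge> 1"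
    and hc: "continuous_map X T h"
    unfolding Cp_tor_def Cp_set_def by auto
  then have "h ` topspace X \<subseteq> group_tor G"
    using TG unfolding group_tor_def continuous_map_def by auto
  then have h_tor: "continuous_map X (subtopology T (group_tor G)) h"
    using hc by (simp add: continuous_map_in_subtopology image_subset_iff_funcset)
  have "h x \<noteq> h y" using h UV(5) by (auto simp: disjnt_def)
  then show "\<exists>W. openin X W \<and> closedin X W \<and> x \<in> W \<and> y \<notin> W"
    by (rule totally_disconnected_sp_separate_by_map[OF h_tor td_tor x y])
qed

theorem theorem8p1:
  fixes G :: "('g, 'm) monoid_scheme" and T :: "'g topology" and X :: "'x topology"
  assumes "topological_group G T"
    and "T closure_of (group_tor G) = topspace T"
    and "totally_disconnected_sp (subtopology T (group_tor G))"
    and "tychonoff_space X" and "topspace X \<noteq> {}"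
    and "G_regular G T X"
  shows "totally_disconnected_sp X \<longleftrightarrow>
           (Cp_top X T) closure_of (Cp_tor G X T) = topspace (Cp_top X T)"
proof -
  have G: "group G" "topspace T = carrier G" "Hausdorff_space T"
    using assms(1) unfolding topological_group_def by auto
  have "t1_space X"
    using assms(4) unfolding tychonoff_space_def by auto
  show ?thesis
  proof
    show "Cp_top X T closure_of Cp_tor G X T = topspace (Cp_top X T)"
      if "totally_disconnected_sp X"
      using Cp_tor_dense_if_totally_disconnected[OF G(1,2) assms(2) that] .
    show "totally_disconnected_sp X"
      if "Cp_top X T closure_of Cp_tor G X T = topspace (Cp_top X T)"
      using totally_disconnected_if_Cp_tor_dense[OF G(2,3) \<open>t1_space X\<close> assms(6,3) that] .
  qed
qed

end
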